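(* Let $X\in\mathcal{L}\cap\mathcal{M}(r)$ with $s=\operatorname{rank}(X)$, let $y\in\mathbb{R}^l$ and $\alpha>0$. Set $\beta=\sigma_r(X)/\|\nabla_XL(X;y)\|_2$ if $\nabla_XL(X;y)\ne O$ and $\beta=\infty$ otherwise. Consider the statements (a) $-\nabla_XL(X;y)\in\mathrm{N}^F_{\mathcal{M}(r)}(X)$ (i.e. $X$ is an $F$-stationary point with multiplier $y$); (b) $X\in\Pi_{\mathcal{M}(r)}(X-\alpha\nabla_XL(X;y))$ (i.e. $X$ is an $\alpha$-stationary point with multiplier $y$). Then: (i) (b) implies (a); (ii) if $s=r$ and $\alpha\in(0,\beta]$, then (a) implies (b); (iii) if $s<r$, then (a) implies (b).
   Context: $\langle X,Y\rangle=\sum_{i,j}X_{ij}Y_{ij}$, $\|\cdot\|_F$ the Frobenius norm, $\|\cdot\|_2$ the spectral norm, $\sigma_r(X)$ the $r$-th largest singular value. $f:\mathbb{R}^{m\times n}\to\mathbb{R}$ continuously differentiable; $A^1,\dots,A^l\in\mathbb{R}^{m\times n}$, $b\in\mathbb{R}^l$; $\mathcal{A}(X)=(\langle A^1,X\rangle,\dots,\langle A^l,X\rangle)^\top$; $\mathcal{L}=\{X:\mathcal{A}(X)=b\}$; $\mathcal{M}(r)=\{X:\operatorname{rank}X\le r\}$ with $0\le r<n\le m$. Lagrangian $L(X;y)=f(X)+\sum_{i=1}^ly_i(\langle A^i,X\rangle-b_i)$. $\Pi_{\mathcal{M}(r)}(Z)=\operatorname{argmin}_{Y\in\mathcal{M}(r)}\|Y-Z\|_F$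 (a set). For closed $\Omega$, $X\in\Omega$: $\mathrm{T}^B_\Omega(X)$ is the set of $\Xi$ with $X^k\in\Omega$, $X^k\to X$, $t_k\downarrow0$, $(X^k-X)/t_k\to\Xi$; $\mathrm{N}^F_\Omega(X)=\{Y:\langle Y,\Xi\rangle\le0\ \forall\Xi\in\mathrm{T}^B_\Omega(X)\}$. *)

theory Defs
  imports "HOL-Analysis.Analysis"
begin

text \<open>Matrices in R^(m x n) are modelled as real^'n^'m (rows indexed by 'm, columns by 'n).
  The library inner product on this type is the Frobenius inner product sum_ij X_ij Y_ij,
  and the library norm is the Frobenius norm.\<close>

definition spec_norm :: "real^'n^'m \<Rightarrow> real" where
  "spec_norm X = onorm (\<lambda>x. X *v x)"

definition outer_prod :: "real^'m \<Rightarrow> real^'n \<Rightarrow> real^'n^'m" where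
  "outer_prod u v = (\<chi> i j. u $ i * v $ j)"

text \<open>sigma is a (1-indexed) list of singular values of X: X = sum_{k=1}^n sigma_k u_k v_k^T
  with orthonormal u_1..u_n, orthonormal v_1..v_n, sigma_1 >= ... >= sigma_n >= 0 (thin SVD).\<close>
definition is_singular_values :: "real^'n^'m \<Rightarrow> (nat \<Rightarrow> real) \<Rightarrow> bool" where
  "is_singular_values X \<sigma> \<longleftrightarrow>
     (\<forall>k\<in>{1..CARD('n)}. 0 \<le> \<sigma> k) \<and>
     (\<forall>k\<in>{1..CARD('n)}. \<forall>j\<in>{1..CARD('n)}. k \<le> j \<longrightarrow> \<sigma> j \<le> \<sigma> k) \<and>
     (\<exists>(u::nat \<Rightarrow> real^'m) (v::nat \<Rightarrow> real^'n).
        (\<forall>k\<in>{1..CARD('n)}. \<forall>j\<in>{1..CARD('n)}. u k \<bullet> u j = (if k = j then 1 else 0)) \<and>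
        (\<forall>k\<in>{1..CARD('n)}. \<forall>j\<in>{1..CARD('n)}. v k \<bullet> v j = (if k = j then 1 else 0)) \<and>
        X = (\<Sum>k=1..CARD('n). \<sigma> k *\<^sub>R outer_prod (u k) (v k)))"

definition sing_val :: "nat \<Rightarrow> real^'n^'m \<Rightarrow> real" where
  "sing_val r X = (SOME \<sigma>. is_singular_values X \<sigma>) r"

text \<open>Affine set L = {X. A(X) = b}, with A^1..A^l given as A 0 .. A (l-1).\<close>
definition affine_feas :: "nat \<Rightarrow> (nat \<Rightarrow> real^'n^'m) \<Rightarrow> (nat \<Rightarrow> real) \<Rightarrow> (real^'n^'m) set" where
  "affine_feas l A b = {X. \<forall>i<l. A i \<bullet> X = b i}"

definition low_rank :: "nat \<Rightarrow> (real^'n^'m) set" where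
  "low_rank r = {X. rank X \<le> r}"

definition lagrangian :: "(real^'n^'m \<Rightarrow> real) \<Rightarrow> nat \<Rightarrow> (nat \<Rightarrow> real^'n^'m) \<Rightarrow> (nat \<Rightarrow> real)
    \<Rightarrow> real^'n^'m \<Rightarrow> (nat \<Rightarrow> real) \<Rightarrow> real" where
  "lagrangian f l A b X y = f X + (\<Sum>i<l. y i * (A i \<bullet> X - b i))"

definition proj_set :: "('a::real_normed_vector) set \<Rightarrow> 'a \<Rightarrow> 'a set" where
  "proj_set \<Omega> Z = {Y \<in> \<Omega>. \<forall>W\<in>\<Omega>. norm (Y - Z) \<le> norm (W - Z)}"

definition bouligand_tangent :: "('a::real_normed_vector) set \<Rightarrow> 'a \<Rightarrow> 'a set" where
  "bouligand_tangent \<Omega> X = {\<Xi>. \<exists>(Xs::nat \<Rightarrow> 'a) (t::nat \<Rightarrow> real).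
      (\<forall>k. Xs k \<in> \<Omega>) \<and> Xs \<longlonglongrightarrow> X \<and> (\<forall>k. 0 < t k) \<and> decseq t \<and> t \<longlonglongrightarrow> 0 \<and>
      (\<lambda>k. (Xs k - X) /\<^sub>R t k) \<longlonglongrightarrow> \<Xi>}"

definition frechet_normal :: "('a::real_inner) set \<Rightarrow> 'a \<Rightarrow> 'a set" where
  "frechet_normal \<Omega> X = {Y. \<forall>\<Xi>\<in>bouligand_tangent \<Omega> X. Y \<bullet> \<Xi> \<le> 0}"

end

(*
  Testing the Frechet normal cone of M(r) against lines through X that stay inside M(r) gives:
  if rank X < r then every rank-one direction is admissible, so G = 0; in general the directions
  (X w) c^T and c (X^T w)^T are admissible, so X^T G = 0 and G X^T = 0.  Then X and G have
  orthogonal row and column spaces, the singular values of X - \<alpha> G are those of X together with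
  those of \<alpha> G, and an Eckart-Young argument shows that X is a nearest point of rank at most r as
  long as \<alpha> \<parallel>G\<parallel>\<^sub>2 \<le> \<sigma>\<^sub>r(X).  The converse (b) \<Longrightarrow> (a) is the first-order expansion of the
  distance to X - \<alpha> G along tangent directions.  Since \<sigma>\<^sub>r(X) is read off an arbitrary
  singular value decomposition, the existence of one is proved by the variational construction.
*)

theory Submission
  imports Defs
begin

section \<open>Orthonormal families\<close>

definition orthonormal_on :: "'i set \<Rightarrow> ('i \<Rightarrow> 'a::real_inner) \<Rightarrow> bool" where
  "orthonormal_on I v \<longleftrightarrow> (\<forall>i\<in>I. \<forall>j\<in>I. v i \<bullet> v j = (if i = j then 1 else 0))"

lemma orthonormal_on_subset: "orthonormal_on I v \<Longrightarrow> J \<subseteq> I \<Longrightarrow> orthonormal_on J v"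
  unfolding orthonormal_on_def by blast

lemma orthonormal_on_insert:
  assumes "orthonormal_on I v" "j \<notin> I" "x \<bullet> x = 1" "\<And>i. i \<in> I \<Longrightarrow> v i \<bullet> x = 0"
  shows "orthonormal_on (insert j I) (v(j := x))"
  using assms by (auto simp: orthonormal_on_def inner_commute)

lemma exists_unit_orthogonal:
  fixes V :: "'a::euclidean_space set"
  assumes "finite V" "card V < DIM('a)"
  obtains x where "norm x = 1" "\<And>w. w \<in> V \<Longrightarrow> w \<bullet> x = 0"
proof -
  have "dim V < DIM('a)" using assms dim_le_card' le_less_trans by blast
  then obtain x where "x \<noteq> 0" "\<And>w. w \<in> span V \<Longrightarrow> orthogonal x w"
    using orthogonal_to_subspace_exists by blast
  then show ?thesis
    by (intro that[of "x /\<^sub>R norm x"]) (auto simp: orthogonal_def inner_commute span_base)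
qed

lemma orthonormal_on_extend:
  fixes u :: "'i \<Rightarrow> 'a::euclidean_space"
  assumes "finite I" "finite J" "orthonormal_on I u" "card (I \<union> J) \<le> DIM('a)"
  shows "\<exists>u'. (\<forall>i\<in>I. u' i = u i) \<and> orthonormal_on (I \<union> J) u'"
  using assms(2,4)
proof (induction J rule: finite_induct)
  case empty
  then show ?case using assms(3) by auto
next
  case (insert j J)
  have "card (I \<union> J) \<le> card (I \<union> insert j J)"
    using assms(1) insert.hyps(1) by (intro card_mono) auto
  then obtain u' where u': "\<forall>i\<in>I. u' i = u i" "orthonormal_on (I \<union> J) u'"
    using insert.IH insert.prems by fastforce
  show ?case
  proof (cases "j \<in> I")
    case True
    then show ?thesis using u' by (auto simp: insert_absorb)
  next
    case False
    have "card (I \<union> insert j J) = Suc (card (I \<union> J))"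
      using False insert.hyps assms(1) by simp
    then have "card (u' ` (I \<union> J)) < DIM('a)"
      using insert.prems card_image_le[of "I \<union> J" u'] assms(1) insert.hyps(1) by simp
    then obtain x where x: "norm x = 1" "\<And>w. w \<in> u' ` (I \<union> J) \<Longrightarrow> w \<bullet> x = 0"
      using exists_unit_orthogonal[of "u' ` (I \<union> J)"] assms(1) insert.hyps(1) by auto
    have "orthonormal_on (I \<union> insert j J) (u'(j := x))"
      using orthonormal_on_insert[OF u'(2), of j x] x False insert.hyps(2) by (simp add: norm_eq_1)
    moreover have "\<forall>i\<in>I. (u'(j := x)) i = u i"
      using u'(1) False by auto
    ultimately show ?thesis by blast
  qed
qed

lemma orthonormal_on_expansion:
  fixes v :: "'i \<Rightarrow> 'a::euclidean_space"
  assumes "finite I" "card I = DIM('a)" "orthonormal_on I v"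
  shows "x = (\<Sum>j\<in>I. (v j \<bullet> x) *\<^sub>R v j)"
proof -
  have inj: "inj_on v I"
    using assms(3) unfolding orthonormal_on_def by (metis inj_onI zero_neq_one)
  have orth: "pairwise orthogonal (v ` I)" and unit: "\<And>b. b \<in> v ` I \<Longrightarrow> norm b = 1"
    using assms(3) by (auto simp: orthonormal_on_def pairwise_def orthogonal_def norm_eq_1)
  then have "independent (v ` I)"
    using pairwise_orthogonal_independent by fastforce
  moreover have "card (v ` I) = dim (UNIV :: 'a set)"
    using inj assms(2) by (simp add: card_image)
  ultimately have "span (v ` I) = UNIV"
    using card_eq_dim[of "v ` I" UNIV] assms(1) by auto
  then have "x = (\<Sum>b\<in>v ` I. (x \<bullet> b) *\<^sub>R b)"
    using orthonormal_basis_expand[OF orth unit] assms(1) by simp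
  also have "\<dots> = (\<Sum>j\<in>I. (v j \<bullet> x) *\<^sub>R v j)"
    using inj by (simp add: sum.reindex inner_commute)
  finally show ?thesis .
qed

lemma orthonormal_on_norm_sum:
  assumes "finite K" "orthonormal_on K u"
  shows "(norm (\<Sum>k\<in>K. a k *\<^sub>R u k))\<^sup>2 = (\<Sum>k\<in>K. (a k)\<^sup>2)"
proof -
  have "pairwise (\<lambda>i j. orthogonal (a i *\<^sub>R u i) (a j *\<^sub>R u j)) K"
    using assms(2)
    by (intro pairwise_ortho_scaleR) (auto simp: pairwise_def orthogonal_def orthonormal_on_def)
  moreover have "norm (u k) = 1" if "k \<in> K" for k
    using assms(2) that by (simp add: orthonormal_on_def norm_eq_1)
  ultimately show ?thesis
    using assms(1) by (simp add: norm_sum_Pythagorean power_mult_distrib)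
qed

lemma orthonormal_on_projection:
  fixes e :: "'i \<Rightarrow> 'a::real_inner" and z :: 'a
  assumes "finite J" "orthonormal_on J e"
  defines "p \<equiv> \<Sum>j\<in>J. (e j \<bullet> z) *\<^sub>R e j"
  shows "(norm (z - p))\<^sup>2 = (norm z)\<^sup>2 - (\<Sum>j\<in>J. (e j \<bullet> z)\<^sup>2)"
    and "y \<in> span (e ` J) \<Longrightarrow> orthogonal (z - p) y"
proof -
  have ep: "e i \<bullet> p = e i \<bullet> z" if "i \<in> J" for i
  proof -
    have "e i \<bullet> p = (\<Sum>j\<in>J. if j = i then e i \<bullet> z else 0)"
      unfolding p_def inner_sum_right
      using assms(2) that by (intro sum.cong) (auto simp: orthonormal_on_def)
    then show ?thesis using assms(1) that by simp
  qed
  show orth: "orthogonal (z - p) y" if "y \<in> span (e ` J)" for y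
    using that
  proof (rule orthogonal_to_span)
    fix w assume "w \<in> e ` J"
    then obtain i where "i \<in> J" "w = e i" by blast
    then show "orthogonal (z - p) w"
      using ep[of i] by (simp add: orthogonal_def inner_commute[of "z - p"] inner_diff_right)
  qed
  have "p \<in> span (e ` J)" unfolding p_def by (intro span_sum span_scale span_base) auto
  then have "(norm z)\<^sup>2 = (norm (z - p))\<^sup>2 + (norm p)\<^sup>2"
    using norm_add_Pythagorean[OF orth[OF \<open>p \<in> span (e ` J)\<close>]] by simp
  moreover have "(norm p)\<^sup>2 = (\<Sum>j\<in>J. (e j \<bullet> z)\<^sup>2)"
    unfolding p_def using assms(1,2) by (rule orthonormal_on_norm_sum)
  ultimately show "(norm (z - p))\<^sup>2 = (norm z)\<^sup>2 - (\<Sum>j\<in>J. (e j \<bullet> z)\<^sup>2)" by simp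
qed

lemma bessel_inequality:
  assumes "finite J" "orthonormal_on J e"
  shows "(\<Sum>j\<in>J. (e j \<bullet> z)\<^sup>2) \<le> (norm z)\<^sup>2"
  using orthonormal_on_projection(1)[OF assms, of z] by (metis diff_ge_0_iff_ge zero_le_power2)

lemma norm_sq_diff_span_ge:
  assumes "finite J" "orthonormal_on J e" "s \<in> span (e ` J)"
  shows "(norm z)\<^sup>2 - (\<Sum>j\<in>J. (e j \<bullet> z)\<^sup>2) \<le> (norm (z - s))\<^sup>2"
proof -
  let ?p = "\<Sum>j\<in>J. (e j \<bullet> z) *\<^sub>R e j"
  have "?p \<in> span (e ` J)" by (intro span_sum span_scale span_base) auto
  then have "?p - s \<in> span (e ` J)" using assms(3) by (rule span_diff)
  from orthonormal_on_projection(2)[OF assms(1,2) this, of z]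
  have "(norm (z - s))\<^sup>2 = (norm (z - ?p))\<^sup>2 + (norm (?p - s))\<^sup>2"
    using norm_add_Pythagorean by fastforce
  then show ?thesis using orthonormal_on_projection(1)[OF assms(1,2)] by simp
qed

section \<open>Existence of a singular value decomposition\<close>

lemma norm_expand_sq:
  fixes a b :: "'a::real_inner"
  shows "(norm (a + t *\<^sub>R b))\<^sup>2 = (norm a)\<^sup>2 + 2 * t * (a \<bullet> b) + t\<^sup>2 * (norm b)\<^sup>2"
proof -
  have "(norm (a + t *\<^sub>R b))\<^sup>2 = (a + t *\<^sub>R b) \<bullet> (a + t *\<^sub>R b)"
    by (rule power2_norm_eq_inner)
  also have "\<dots> = a \<bullet> a + 2 * t * (a \<bullet> b) + t\<^sup>2 * (b \<bullet> b)"
    by (simp add: inner_add_left inner_add_right inner_commute[of b a] power2_eq_square algebra_simps)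
  finally show ?thesis by (simp add: power2_norm_eq_inner)
qed

lemma linear_le_quadratic_imp_zero:
  fixes c K :: real
  assumes "\<And>t. 2 * t * c \<le> t\<^sup>2 * K"
  shows "c = 0"
proof (rule ccontr)
  assume "c \<noteq> 0"
  define D where "D = \<bar>K\<bar> + 1"
  have D: "D > 0" "2 * D > K" by (auto simp: D_def)
  have "2 * (c / D) * c \<le> (c / D)\<^sup>2 * K" by (rule assms)
  then have "2 * c\<^sup>2 * D \<le> c\<^sup>2 * K"
    using D(1) by (simp add: power2_eq_square field_simps)
  then have "c\<^sup>2 * (2 * D - K) \<le> 0" by (simp add: algebra_simps)
  moreover have "c\<^sup>2 * (2 * D - K) > 0" using \<open>c \<noteq> 0\<close> D(2) by simp
  ultimately show False by linarith
qed

lemma linear_norm_max_orthogonal: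
  assumes "linear f" "subspace S" "x0 \<in> S" "norm x0 = 1"
    and max: "\<And>x. x \<in> S \<Longrightarrow> norm (f x) \<le> norm (f x0) * norm x"
    and "w \<in> S" "x0 \<bullet> w = 0"
  shows "f x0 \<bullet> f w = 0"
  \<comment> \<open>\<open>t \<mapsto> \<parallel>f x0\<parallel>\<^sup>2 \<parallel>x0 + t w\<parallel>\<^sup>2 - \<parallel>f (x0 + t w)\<parallel>\<^sup>2\<close> is nonnegative and vanishes at \<open>t = 0\<close>\<close>
proof (rule linear_le_quadratic_imp_zero)
  fix t :: real
  have "x0 + t *\<^sub>R w \<in> S" using assms(2,3,6) by (simp add: subspace_add subspace_scale)
  then have "norm (f (x0 + t *\<^sub>R w)) \<le> norm (f x0) * norm (x0 + t *\<^sub>R w)" by (rule max)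
  then have "(norm (f x0 + t *\<^sub>R f w))\<^sup>2 \<le> (norm (f x0))\<^sup>2 * (norm (x0 + t *\<^sub>R w))\<^sup>2"
    using assms(1) by (simp add: linear_add linear_scale power_mono flip: power_mult_distrib)
  then show "2 * t * (f x0 \<bullet> f w) \<le> t\<^sup>2 * ((norm (f x0))\<^sup>2 * (norm w)\<^sup>2 - (norm (f w))\<^sup>2)"
    using assms(4,7) by (simp add: norm_expand_sq algebra_simps)
qed

lemma linear_attains_norm_max:
  fixes f :: "'a::euclidean_space \<Rightarrow> 'b::real_normed_vector"
  assumes "linear f" "subspace S" "S \<noteq> {0}"
  obtains x0 where "x0 \<in> S" "norm x0 = 1" "\<And>x. x \<in> S \<Longrightarrow> norm (f x) \<le> norm (f x0) * norm x"
proof -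
  have "compact (S \<inter> sphere 0 1)"
    using assms(2) by (intro closed_Int_compact closed_subspace compact_sphere)
  moreover obtain y where "y \<in> S" "y \<noteq> 0"
    using assms(2,3) subspace_0 by blast
  then have "y /\<^sub>R norm y \<in> S \<inter> sphere 0 1"
    using assms(2) by (simp add: subspace_scale)
  moreover have "continuous_on (S \<inter> sphere 0 1) (\<lambda>x. norm (f x))"
    using assms(1)
    by (intro continuous_intros linear_continuous_on linear_conv_bounded_linear[THEN iffD1])
  ultimately obtain x0 where x0: "x0 \<in> S \<inter> sphere 0 1"
    and le: "\<And>z. z \<in> S \<inter> sphere 0 1 \<Longrightarrow> norm (f z) \<le> norm (f x0)"
    using continuous_attains_sup[of "S \<inter> sphere 0 1" "\<lambda>x. norm (f x)"] by blast
  have "norm (f x) \<le> norm (f x0) * norm x" if "x \<in> S" for x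
  proof (cases "x = 0")
    case True
    then show ?thesis using assms(1) linear_0 by simp
  next
    case False
    have "norm (f (x /\<^sub>R norm x)) \<le> norm (f x0)"
      using le that False assms(2) by (simp add: subspace_scale)
    then show ?thesis
      using False assms(1) by (simp add: linear_scale field_simps)
  qed
  with x0 show ?thesis by (intro that[of x0]) auto
qed

text \<open>Courant-Fischer: \<open>\<parallel>f (v j)\<parallel>\<close> is the \<open>j\<close>-th singular value of \<open>f\<close>.\<close>

definition right_singular_frame ::
    "('a::real_inner \<Rightarrow> 'b::real_normed_vector) \<Rightarrow> nat \<Rightarrow> (nat \<Rightarrow> 'a) \<Rightarrow> bool" where
  "right_singular_frame f k v \<longleftrightarrow> orthonormal_on {1..k} v \<and>
     (\<forall>j\<in>{1..k}. \<forall>x. (\<forall>i\<in>{1..<j}. v i \<bullet> x = 0) \<longrightarrow> norm (f x) \<le> norm (f (v j)) * norm x)"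

lemma right_singular_frame_exists:
  fixes f :: "'a::euclidean_space \<Rightarrow> 'b::real_normed_vector"
  assumes "linear f" "k \<le> DIM('a)"
  shows "\<exists>v. right_singular_frame f k v"
  using assms(2)
proof (induction k)
  case 0
  then show ?case by (simp add: right_singular_frame_def orthonormal_on_def)
next
  case (Suc k)
  then obtain v where v: "right_singular_frame f k v" by auto
  define S where "S = {x. \<forall>i\<in>{1..k}. v i \<bullet> x = 0}"
  have "subspace S"
    unfolding S_def by (auto simp: subspace_def inner_add_right)
  moreover have "card (v ` {1..k}) < DIM('a)"
    using card_image_le[of "{1..k}" v] Suc.prems by simp
  then obtain y where "norm y = 1" "\<And>w. w \<in> v ` {1..k} \<Longrightarrow> w \<bullet> y = 0"
    using exists_unit_orthogonal[of "v ` {1..k}"] by auto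
  then have "y \<in> S" "y \<noteq> 0" by (auto simp: S_def)
  then have "S \<noteq> {0}" by auto
  ultimately obtain x0 where x0: "x0 \<in> S" "norm x0 = 1"
    and max: "\<And>x. x \<in> S \<Longrightarrow> norm (f x) \<le> norm (f x0) * norm x"
    using linear_attains_norm_max[OF assms(1)] by blast
  have "orthonormal_on (insert (Suc k) {1..k}) (v(Suc k := x0))"
    using v x0 by (intro orthonormal_on_insert) (auto simp: right_singular_frame_def S_def norm_eq_1)
  moreover have "norm (f x) \<le> norm (f ((v(Suc k := x0)) j)) * norm x"
    if "j \<in> {1..Suc k}" "\<forall>i\<in>{1..<j}. (v(Suc k := x0)) i \<bullet> x = 0" for j x
  proof (cases "j = Suc k")
    case True
    then show ?thesis using that(2) max by (simp add: S_def)
  next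
    case False
    then show ?thesis using that v by (simp add: right_singular_frame_def)
  qed
  ultimately have "right_singular_frame f (Suc k) (v(Suc k := x0))"
    by (simp add: right_singular_frame_def atLeastAtMostSuc_conv)
  then show ?case by blast
qed

lemma right_singular_frame_decreasing:
  assumes "right_singular_frame f k v" "i \<le> j" "i \<in> {1..k}" "j \<in> {1..k}"
  shows "norm (f (v j)) \<le> norm (f (v i))"
proof -
  have "\<forall>l\<in>{1..<i}. v l \<bullet> v j = 0"
    using assms by (auto simp: right_singular_frame_def orthonormal_on_def)
  moreover have "norm (v j) = 1"
    using assms(1,4) by (simp add: right_singular_frame_def orthonormal_on_def norm_eq_1)
  moreover have "\<forall>x. (\<forall>l\<in>{1..<i}. v l \<bullet> x = 0) \<longrightarrow> norm (f x) \<le> norm (f (v i)) * norm x"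
    using assms(1,3) unfolding right_singular_frame_def by blast
  ultimately show ?thesis by fastforce
qed

lemma right_singular_frame_images_orthogonal:
  assumes "linear f" "right_singular_frame f k v" "i < j" "i \<in> {1..k}" "j \<in> {1..k}"
  shows "f (v i) \<bullet> f (v j) = 0"
proof (rule linear_norm_max_orthogonal[OF assms(1)])
  let ?S = "{x. \<forall>l\<in>{1..<i}. v l \<bullet> x = 0}"
  show "subspace ?S" by (auto simp: subspace_def inner_add_right)
  show "v i \<in> ?S" "v j \<in> ?S" "norm (v i) = 1" "v i \<bullet> v j = 0"
    using assms(2-5) by (auto simp: right_singular_frame_def orthonormal_on_def norm_eq_1)
  show "norm (f x) \<le> norm (f (v i)) * norm x" if "x \<in> ?S" for x
    using assms(2,4) that unfolding right_singular_frame_def by blast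
qed

lemma linear_svd:
  fixes f :: "'a::euclidean_space \<Rightarrow> 'b::euclidean_space"
  assumes "linear f" "DIM('a) \<le> DIM('b)"
  obtains \<sigma> u v where "orthonormal_on {1..DIM('a)} u" "orthonormal_on {1..DIM('a)} v"
    "\<And>j. 0 \<le> \<sigma> j" "\<And>i j. i \<in> {1..DIM('a)} \<Longrightarrow> j \<in> {1..DIM('a)} \<Longrightarrow> i \<le> j \<Longrightarrow> \<sigma> j \<le> \<sigma> i"
    "\<And>x. f x = (\<Sum>j=1..DIM('a). (\<sigma> j * (v j \<bullet> x)) *\<^sub>R u j)"
proof -
  let ?N = "{1..DIM('a)}"
  obtain v where v: "right_singular_frame f DIM('a) v"
    using right_singular_frame_exists[OF assms(1)] by blast
  define \<sigma> where "\<sigma> j = norm (f (v j))" for j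
  define I where "I = {j\<in>?N. f (v j) \<noteq> 0}"
  have "f (v i) \<bullet> f (v j) = 0" if "i \<in> I" "j \<in> I" "i \<noteq> j" for i j
    using right_singular_frame_images_orthogonal[OF assms(1) v, of i j]
      right_singular_frame_images_orthogonal[OF assms(1) v, of j i] that
    by (cases "i < j") (auto simp: I_def inner_commute)
  then have "orthonormal_on I (\<lambda>j. f (v j) /\<^sub>R \<sigma> j)"
    by (auto simp: orthonormal_on_def I_def \<sigma>_def dot_square_norm power2_eq_square field_simps)
  moreover have IN: "I \<union> ?N = ?N" by (auto simp: I_def)
  then have "card (I \<union> ?N) \<le> DIM('b)" using assms(2) by simp
  moreover have "finite I" by (simp add: I_def)
  ultimately obtain u where u: "\<forall>j\<in>I. u j = f (v j) /\<^sub>R \<sigma> j" "orthonormal_on ?N u"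
    using orthonormal_on_extend[of I ?N "\<lambda>j. f (v j) /\<^sub>R \<sigma> j"] IN by auto
  have fv: "f (v j) = \<sigma> j *\<^sub>R u j" if "j \<in> ?N" for j
    using u(1) that by (cases "j \<in> I") (auto simp: I_def \<sigma>_def)
  have "f x = (\<Sum>j\<in>?N. (\<sigma> j * (v j \<bullet> x)) *\<^sub>R u j)" for x
  proof -
    have "f x = f (\<Sum>j\<in>?N. (v j \<bullet> x) *\<^sub>R v j)"
      using v by (subst orthonormal_on_expansion[of ?N v x]) (auto simp: right_singular_frame_def)
    also have "\<dots> = (\<Sum>j\<in>?N. (\<sigma> j * (v j \<bullet> x)) *\<^sub>R u j)"
      using assms(1) fv by (simp add: linear_sum linear_scale mult.commute)
    finally show ?thesis .
  qed
  moreover have "\<sigma> j \<le> \<sigma> i" if "i \<in> ?N" "j \<in> ?N" "i \<le> j" for i j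
    using right_singular_frame_decreasing[OF v that(3,1,2)] by (simp add: \<sigma>_def)
  moreover have "orthonormal_on ?N v" using v by (simp add: right_singular_frame_def)
  moreover have "0 \<le> \<sigma> j" for j by (simp add: \<sigma>_def)
  ultimately show ?thesis using that u(2) by blast
qed

lemma outer_prod_mult_vec: "outer_prod u v *v x = (v \<bullet> x) *\<^sub>R u"
  by (simp add: vec_eq_iff matrix_vector_mult_def outer_prod_def inner_vec_def sum_distrib_left
      sum_distrib_right mult.commute mult.left_commute)

lemma sum_scaleR_mult_vec:
  "(\<Sum>k\<in>K. c k *\<^sub>R (M k :: real^'n^'m)) *v x = (\<Sum>k\<in>K. c k *\<^sub>R (M k *v x))"
  by (induction K rule: infinite_finite_induct)
    (simp_all add: matrix_vector_mult_add_rdistrib scaleR_matrix_vector_assoc)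

lemma singular_values_exist:
  fixes X :: "real^'n^'m"
  assumes "CARD('n) \<le> CARD('m)"
  shows "\<exists>\<sigma>. is_singular_values X \<sigma>"
proof -
  have dims: "DIM(real^'n) \<le> DIM(real^'m)" using assms by simp
  obtain \<sigma> u v where svd: "orthonormal_on {1..DIM(real^'n)} u" "orthonormal_on {1..DIM(real^'n)} v"
    "\<And>j. 0 \<le> \<sigma> j"
    "\<And>i j. i \<in> {1..DIM(real^'n)} \<Longrightarrow> j \<in> {1..DIM(real^'n)} \<Longrightarrow> i \<le> j \<Longrightarrow> \<sigma> j \<le> \<sigma> i"
    and Xx: "\<And>x. X *v x = (\<Sum>j=1..DIM(real^'n). (\<sigma> j * (v j \<bullet> x)) *\<^sub>R u j)"
    by (rule linear_svd[OF matrix_vector_mul_linear[of X] dims]) blast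
  have D: "DIM(real^'n) = CARD('n)" by simp
  have "X = (\<Sum>k=1..CARD('n). \<sigma> k *\<^sub>R outer_prod (u k) (v k))"
    by (simp add: matrix_eq Xx sum_scaleR_mult_vec outer_prod_mult_vec)
  with svd[unfolded D] show ?thesis
    unfolding is_singular_values_def orthonormal_on_def[symmetric] by blast
qed

section \<open>Tangent and normal cones\<close>

lemma line_in_bouligand_tangent:
  assumes "\<And>t. X + t *\<^sub>R H \<in> \<Omega>"
  shows "H \<in> bouligand_tangent \<Omega> X"
proof -
  define t where "t k = inverse (real (Suc k))" for k
  have "t \<longlonglongrightarrow> 0"
    unfolding t_def by (rule LIMSEQ_inverse_real_of_nat)
  moreover have "\<forall>k. 0 < t k" "decseq t"
    unfolding t_def decseq_def by (auto intro: le_imp_inverse_le)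
  ultimately have t: "\<forall>k. 0 < t k" "decseq t" "t \<longlonglongrightarrow> 0" by blast+
  have "(\<lambda>k. X + t k *\<^sub>R H) \<longlonglongrightarrow> X + 0 *\<^sub>R H"
    using t(3) by (intro tendsto_intros)
  moreover have "((X + t k *\<^sub>R H) - X) /\<^sub>R t k = H" for k
    using t(1)[rule_format, of k] by simp
  ultimately show ?thesis
    unfolding bouligand_tangent_def using assms t
    by (intro CollectI exI[of _ "\<lambda>k. X + t k *\<^sub>R H"] exI[of _ t]) simp
qed

lemma frechet_normal_orthogonal_line:
  assumes "- G \<in> frechet_normal \<Omega> X" "\<And>t. X + t *\<^sub>R H \<in> \<Omega>"
  shows "G \<bullet> H = 0"
proof -
  have "H \<in> bouligand_tangent \<Omega> X" "- H \<in> bouligand_tangent \<Omega> X"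
    using assms(2)[of "- _"] by (auto intro!: line_in_bouligand_tangent assms(2))
  then have "- G \<bullet> H \<le> 0" "- G \<bullet> - H \<le> 0"
    using assms(1) unfolding frechet_normal_def by blast+
  then show ?thesis by simp
qed

lemma proj_set_imp_frechet_normal:
  fixes G X :: "'a::real_inner"
  assumes proj: "X \<in> proj_set \<Omega> (X - \<alpha> *\<^sub>R G)" and "\<alpha> > 0"
  shows "- G \<in> frechet_normal \<Omega> X"
  unfolding frechet_normal_def
proof (intro CollectI ballI)
  fix \<Xi> assume "\<Xi> \<in> bouligand_tangent \<Omega> X"
  then obtain Xs t where Xs: "\<forall>k. Xs k \<in> \<Omega>" and t: "\<forall>k. 0 < t k" "t \<longlonglongrightarrow> 0"
    and lim: "(\<lambda>k. (Xs k - X) /\<^sub>R t k) \<longlonglongrightarrow> \<Xi>"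
    unfolding bouligand_tangent_def by blast
  define D where "D k = (Xs k - X) /\<^sub>R t k" for k
  have ineq: "0 \<le> t k * (norm (D k))\<^sup>2 + 2 * \<alpha> * (G \<bullet> D k)" for k
  proof -
    have "norm (X - (X - \<alpha> *\<^sub>R G)) \<le> norm (Xs k - (X - \<alpha> *\<^sub>R G))"
      using proj Xs unfolding proj_set_def by blast
    moreover have "Xs k - (X - \<alpha> *\<^sub>R G) = \<alpha> *\<^sub>R G + t k *\<^sub>R D k"
      using t(1)[rule_format, of k] by (simp add: D_def)
    ultimately have "(norm (\<alpha> *\<^sub>R G))\<^sup>2 \<le> (norm (\<alpha> *\<^sub>R G + t k *\<^sub>R D k))\<^sup>2"
      by (simp add: power_mono)
    also have "\<dots> = (norm (\<alpha> *\<^sub>R G))\<^sup>2 + 2 * t k * ((\<alpha> *\<^sub>R G) \<bullet> D k)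
        + (t k)\<^sup>2 * (norm (D k))\<^sup>2"
      by (rule norm_expand_sq)
    finally have "0 \<le> t k * (t k * (norm (D k))\<^sup>2 + 2 * \<alpha> * (G \<bullet> D k))"
      by (simp add: power2_eq_square algebra_simps)
    then show ?thesis using t(1)[rule_format, of k] by (simp add: zero_le_mult_iff)
  qed
  have "(\<lambda>k. t k * (norm (D k))\<^sup>2 + 2 * \<alpha> * (G \<bullet> D k))
      \<longlonglongrightarrow> 0 * (norm \<Xi>)\<^sup>2 + 2 * \<alpha> * (G \<bullet> \<Xi>)"
    using lim t(2) unfolding D_def by (intro tendsto_intros)
  then have "0 \<le> 0 * (norm \<Xi>)\<^sup>2 + 2 * \<alpha> * (G \<bullet> \<Xi>)"
    by (rule LIMSEQ_le_const) (use ineq in blast)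
  then show "- G \<bullet> \<Xi> \<le> 0" using \<open>\<alpha> > 0\<close> by (simp add: zero_le_mult_iff)
qed

lemma proj_set_self: "X \<in> \<Omega> \<Longrightarrow> X \<in> proj_set \<Omega> X"
  by (simp add: proj_set_def)

section \<open>Rank-one perturbations\<close>

lemma inner_outer_prod: "(M::real^'n^'m) \<bullet> outer_prod a b = a \<bullet> (M *v b)"
  by (simp add: inner_vec_def outer_prod_def matrix_vector_mult_def sum_distrib_left
      mult.commute mult.left_commute)

lemma inner_outer_prod_outer_prod: "outer_prod a b \<bullet> outer_prod c d = (a \<bullet> c) * (b \<bullet> d)"
  by (simp add: inner_commute[of _ "outer_prod c d"] inner_outer_prod outer_prod_mult_vec
      inner_commute)

lemma inner_transpose_mult_vec: "(transpose (X::real^'n^'m) *v y) \<bullet> x = y \<bullet> (X *v x)"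
  by (metis dot_lmul_matrix transpose_transpose vector_transpose_matrix)

lemma matrix_mul_outer_prod: "(X::real^'n^'m) ** outer_prod w c = outer_prod (X *v w) c"
  by (simp add: vec_eq_iff matrix_matrix_mult_def matrix_vector_mult_def outer_prod_def
      sum_distrib_right mult.assoc)

lemma outer_prod_matrix_mul: "outer_prod c w ** (X::real^'n^'m) = outer_prod c (transpose X *v w)"
  by (simp add: vec_eq_iff matrix_matrix_mult_def matrix_vector_mult_def outer_prod_def
      transpose_def sum_distrib_left mult_ac)

lemma rank_add_mult_left_le: "rank (X + t *\<^sub>R (X ** M)) \<le> rank (X::real^'n^'m)"
proof -
  have "X + t *\<^sub>R (X ** M) = X ** (mat 1 + t *\<^sub>R M)"
    by (simp add: matrix_add_ldistrib matrix_scalar_ac scalar_matrix_assoc)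
  then show ?thesis by (metis rank_mul_le_left)
qed

lemma rank_add_mult_right_le: "rank (X + t *\<^sub>R (M ** X)) \<le> rank (X::real^'n^'m)"
proof -
  have "X + t *\<^sub>R (M ** X) = (mat 1 + t *\<^sub>R M) ** X"
    unfolding matrix_eq
    by (simp add: matrix_vector_mult_add_rdistrib
        flip: matrix_vector_mul_assoc scaleR_matrix_vector_assoc)
  then show ?thesis by (metis rank_mul_le_right)
qed

lemma rank_add_outer_prod_le: "rank (X + t *\<^sub>R outer_prod a b) \<le> rank (X::real^'n^'m) + 1"
proof -
  let ?R = "range (\<lambda>x. X *v x)"
  have "(X + t *\<^sub>R outer_prod a b) *v x = X *v x + (t * (b \<bullet> x)) *\<^sub>R a" for x
    by (simp add: matrix_vector_mult_add_rdistrib outer_prod_mult_vec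
        flip: scaleR_matrix_vector_assoc)
  moreover have "X *v x + c *\<^sub>R a \<in> span (insert a ?R)" for x c
    by (intro span_add span_scale span_base) auto
  ultimately have "range (\<lambda>x. (X + t *\<^sub>R outer_prod a b) *v x) \<subseteq> span (insert a ?R)"
    by auto
  then have "rank (X + t *\<^sub>R outer_prod a b) \<le> dim (insert a ?R)"
    unfolding rank_dim_range by (metis dim_span dim_subset)
  also have "\<dots> \<le> rank X + 1" by (simp add: dim_insert rank_dim_range)
  finally show ?thesis .
qed

lemma low_rank_frechet_normal_range:
  assumes "- G \<in> frechet_normal (low_rank r) X" "rank X \<le> r"
  shows "(X *v w) \<bullet> (G *v c) = 0"
proof -
  have "G \<bullet> outer_prod (X *v w) c = 0"
  proof (rule frechet_normal_orthogonal_line[OF assms(1)])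
    fix t
    show "X + t *\<^sub>R outer_prod (X *v w) c \<in> low_rank r"
      using rank_add_mult_left_le[of X t "outer_prod w c"] assms(2)
      by (simp add: low_rank_def matrix_mul_outer_prod)
  qed
  then show ?thesis by (simp add: inner_outer_prod)
qed

lemma low_rank_frechet_normal_corange:
  assumes "- G \<in> frechet_normal (low_rank r) X" "rank X \<le> r"
  shows "G *v (transpose X *v w) = 0"
proof -
  let ?z = "transpose X *v w"
  have "G \<bullet> outer_prod (G *v ?z) ?z = 0"
  proof (rule frechet_normal_orthogonal_line[OF assms(1)])
    fix t
    show "X + t *\<^sub>R outer_prod (G *v ?z) ?z \<in> low_rank r"
      using rank_add_mult_right_le[of X t "outer_prod (G *v ?z) w"] assms(2)
      by (simp add: low_rank_def outer_prod_matrix_mul)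
  qed
  then show ?thesis by (simp add: inner_outer_prod)
qed

lemma low_rank_frechet_normal_rank_deficient:
  assumes "- G \<in> frechet_normal (low_rank r) X" "rank X < r"
  shows "G = 0"
proof -
  have "G $ i $ j = 0" for i j
  proof -
    have "G \<bullet> outer_prod (axis i 1) (axis j 1) = 0"
    proof (rule frechet_normal_orthogonal_line[OF assms(1)])
      fix t
      show "X + t *\<^sub>R outer_prod (axis i 1) (axis j 1) \<in> low_rank r"
        using rank_add_outer_prod_le[of X t "axis i 1" "axis j 1"] assms(2)
        by (simp add: low_rank_def)
    qed
    then show ?thesis
      by (simp add: inner_outer_prod inner_axis' matrix_vector_mult_basis column_def)
  qed
  then show ?thesis by (simp add: vec_eq_iff)
qed

section \<open>Best low-rank approximation of an orthogonally perturbed matrix\<close>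

lemma norm_sq_matrix_rows: "(norm (M::real^'n^'m))\<^sup>2 = (\<Sum>i\<in>UNIV. (norm (M $ i))\<^sup>2)"
  by (simp add: power2_norm_eq_inner inner_vec_def)

lemma norm_sq_diff_row_span_ge:
  fixes Z W :: "real^'n^'m"
  assumes "finite B" "orthonormal_on B (\<lambda>b. b)" "\<And>i. W $ i \<in> span B"
  shows "(norm Z)\<^sup>2 - (\<Sum>b\<in>B. (norm (Z *v b))\<^sup>2) \<le> (norm (Z - W))\<^sup>2"
proof -
  have "(norm y)\<^sup>2 = (\<Sum>i\<in>UNIV. (y $ i)\<^sup>2)" for y :: "real^'m"
    unfolding power2_norm_eq_inner by (simp add: inner_vec_def power2_eq_square)
  then have "(norm (Z *v b))\<^sup>2 = (\<Sum>i\<in>UNIV. (b \<bullet> Z $ i)\<^sup>2)" for b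
    by (simp add: matrix_vector_mul_component inner_commute)
  then have "(\<Sum>b\<in>B. (norm (Z *v b))\<^sup>2) = (\<Sum>i\<in>UNIV. \<Sum>b\<in>B. (b \<bullet> Z $ i)\<^sup>2)"
    using sum.swap by simp
  moreover have "(\<Sum>i\<in>UNIV. (norm (Z $ i))\<^sup>2 - (\<Sum>b\<in>B. (b \<bullet> Z $ i)\<^sup>2))
      \<le> (\<Sum>i\<in>UNIV. (norm (Z $ i - W $ i))\<^sup>2)"
    using norm_sq_diff_span_ge[OF assms(1,2)] assms(3) by (intro sum_mono) simp
  ultimately show ?thesis
    by (simp add: norm_sq_matrix_rows sum_subtractf)
qed

lemma sum_discounted_weights_le:
  fixes s a :: "'i \<Rightarrow> real"
  assumes "finite K" "R \<subseteq> K" "\<And>k. k \<in> K \<Longrightarrow> 0 \<le> a k \<and> a k \<le> 1"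
    and "\<And>k. k \<in> K \<Longrightarrow> 0 \<le> s k" "\<And>k. k \<in> R \<Longrightarrow> d \<le> s k" "0 \<le> d" "m \<le> card R"
  shows "(\<Sum>k\<in>K. (s k - d) * a k) + d * m \<le> (\<Sum>k\<in>K. s k)"
proof -
  have "(s k - d) * a k \<le> s k - (if k \<in> R then d else 0)" if "k \<in> K" for k
  proof (cases "k \<in> R")
    case True
    then have "(s k - d) * a k \<le> (s k - d) * 1"
      using assms(3,5) that by (intro mult_left_mono) auto
    then show ?thesis using True by simp
  next
    case False
    have "(s k - d) * a k \<le> s k * a k"
      using assms(3,6) that by (simp add: algebra_simps)
    also have "\<dots> \<le> s k * 1"
      using assms(3,4) that by (intro mult_left_mono) auto
    finally show ?thesis using False by simp
  qed
  then have "(\<Sum>k\<in>K. (s k - d) * a k) \<le> (\<Sum>k\<in>K. s k - (if k \<in> R then d else 0))"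
    by (rule sum_mono)
  also have "\<dots> = (\<Sum>k\<in>K. s k) - d * card R"
    using assms(1,2) by (simp add: sum_subtractf sum.If_cases Int_absorb1)
  finally have "(\<Sum>k\<in>K. (s k - d) * a k) \<le> (\<Sum>k\<in>K. s k) - d * card R" .
  moreover have "d * m \<le> d * card R" using assms(6,7) by (simp add: mult_left_mono)
  ultimately show ?thesis by linarith
qed

locale svd_decomposition =
  fixes K :: "nat set" and \<sigma> :: "nat \<Rightarrow> real"
    and u :: "nat \<Rightarrow> real^'m" and v :: "nat \<Rightarrow> real^'n" and X :: "real^'n^'m"
  assumes finite_K: "finite K"
    and orthonormal_u: "orthonormal_on K u" and orthonormal_v: "orthonormal_on K v"
    and X_svd: "X = (\<Sum>k\<in>K. \<sigma> k *\<^sub>R outer_prod (u k) (v k))"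
begin

lemma X_mult_vec: "X *v x = (\<Sum>k\<in>K. (\<sigma> k * (v k \<bullet> x)) *\<^sub>R u k)"
  by (simp add: X_svd sum_scaleR_mult_vec outer_prod_mult_vec)

lemma X_mult_right_singular:
  assumes "j \<in> K"
  shows "X *v v j = \<sigma> j *\<^sub>R u j"
proof -
  have "X *v v j = (\<Sum>k\<in>K. if k = j then \<sigma> j *\<^sub>R u j else 0)"
    unfolding X_mult_vec using orthonormal_v assms
    by (intro sum.cong) (auto simp: orthonormal_on_def)
  then show ?thesis using finite_K assms by simp
qed

lemma X_transpose_mult_left_singular:
  assumes "j \<in> K"
  shows "transpose X *v u j = \<sigma> j *\<^sub>R v j"
proof (rule vector_eq_rdot[THEN iffD1], intro allI)
  fix x
  have "(transpose X *v u j) \<bullet> x = (\<Sum>k\<in>K. \<sigma> k * (v k \<bullet> x) * (u j \<bullet> u k))"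
    unfolding inner_transpose_mult_vec X_mult_vec by (simp add: inner_sum_right)
  also have "\<dots> = (\<Sum>k\<in>K. if k = j then \<sigma> j * (v j \<bullet> x) else 0)"
    using orthonormal_u assms by (intro sum.cong) (auto simp: orthonormal_on_def)
  finally show "(transpose X *v u j) \<bullet> x = (\<sigma> j *\<^sub>R v j) \<bullet> x"
    using finite_K assms by simp
qed

lemma norm_sq_X: "(norm X)\<^sup>2 = (\<Sum>k\<in>K. (\<sigma> k)\<^sup>2)"
proof -
  have "orthonormal_on K (\<lambda>k. outer_prod (u k) (v k))"
    using orthonormal_u orthonormal_v
    by (simp add: orthonormal_on_def inner_outer_prod_outer_prod)
  then show ?thesis
    unfolding X_svd by (rule orthonormal_on_norm_sum[OF finite_K])
qed

end

text \<open>\<open>H\<close> kills the right singular vectors of \<open>X\<close> and maps into the orthogonal complement of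
  its left singular vectors, so the singular values of \<open>X + H\<close> are those of \<open>X\<close> together with
  those of \<open>H\<close>.  Lemma \<open>norm_le_dist_low_rank\<close> is the resulting Eckart-Young inequality,
  proved directly: the rows of \<open>X + H\<close> are projected onto the row space of the competitor \<open>W\<close>,
  and Bessel's inequality bounds how much of each \<open>v k\<close> that row space can capture.\<close>

locale orthogonal_perturbation = svd_decomposition K \<sigma> u v X
  for K \<sigma> u v and X :: "real^'n^'m" +
  fixes H :: "real^'n^'m" and c :: real
  assumes H_v: "\<And>k. k \<in> K \<Longrightarrow> H *v v k = 0"
    and H_u: "\<And>k x. k \<in> K \<Longrightarrow> u k \<bullet> (H *v x) = 0"
    and H_bound: "\<And>x. norm (H *v x) \<le> c * norm x"
begin

lemma norm_sq_X_plus_H: "(norm (X + H))\<^sup>2 = (\<Sum>k\<in>K. (\<sigma> k)\<^sup>2) + (norm H)\<^sup>2"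
proof -
  have "orthogonal X H"
    unfolding X_svd orthogonal_def
    by (simp add: inner_sum_left inner_commute[of "outer_prod _ _"] inner_outer_prod H_v)
  then show ?thesis by (simp add: norm_add_Pythagorean norm_sq_X)
qed

lemma norm_sq_X_plus_H_mult_vec_le:
  assumes "norm b = 1"
  shows "(norm ((X + H) *v b))\<^sup>2 \<le> (\<Sum>k\<in>K. ((\<sigma> k)\<^sup>2 - c\<^sup>2) * (v k \<bullet> b)\<^sup>2) + c\<^sup>2"
proof -
  let ?p = "\<Sum>k\<in>K. (v k \<bullet> b) *\<^sub>R v k"
  have "H *v ?p = (\<Sum>k\<in>K. (v k \<bullet> b) *\<^sub>R (H *v v k))"
    by (simp add: linear_sum[OF matrix_vector_mul_linear] matrix_vector_mult_scaleR)
  then have "H *v b = H *v (b - ?p)"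
    by (simp add: H_v matrix_vector_mult_diff_distrib)
  then have "norm (H *v b) \<le> c * norm (b - ?p)"
    by (metis H_bound)
  then have "(norm (H *v b))\<^sup>2 \<le> c\<^sup>2 * (norm (b - ?p))\<^sup>2"
    by (metis norm_ge_zero power_mono power_mult_distrib)
  also have "(norm (b - ?p))\<^sup>2 = 1 - (\<Sum>k\<in>K. (v k \<bullet> b)\<^sup>2)"
    using orthonormal_on_projection(1)[OF finite_K orthonormal_v, of b] assms by simp
  finally have Hb: "(norm (H *v b))\<^sup>2 \<le> c\<^sup>2 * (1 - (\<Sum>k\<in>K. (v k \<bullet> b)\<^sup>2))" .
  have "orthogonal (X *v b) (H *v b)"
    by (simp add: orthogonal_def X_mult_vec inner_sum_left H_u)
  then have "(norm ((X + H) *v b))\<^sup>2 = (norm (X *v b))\<^sup>2 + (norm (H *v b))\<^sup>2"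
    by (simp add: matrix_vector_mult_add_rdistrib norm_add_Pythagorean)
  moreover have "(norm (X *v b))\<^sup>2 = (\<Sum>k\<in>K. (\<sigma> k)\<^sup>2 * (v k \<bullet> b)\<^sup>2)"
    unfolding X_mult_vec orthonormal_on_norm_sum[OF finite_K orthonormal_u]
    by (simp add: power_mult_distrib)
  moreover have "(\<Sum>k\<in>K. (\<sigma> k)\<^sup>2 * (v k \<bullet> b)\<^sup>2) + c\<^sup>2 * (1 - (\<Sum>k\<in>K. (v k \<bullet> b)\<^sup>2))
      = (\<Sum>k\<in>K. ((\<sigma> k)\<^sup>2 - c\<^sup>2) * (v k \<bullet> b)\<^sup>2) + c\<^sup>2"
    by (simp add: algebra_simps sum_subtractf sum_distrib_left)
  ultimately show ?thesis using Hb by linarith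
qed

lemma sum_norm_sq_X_plus_H_mult_vec_le:
  assumes "finite B" "orthonormal_on B (\<lambda>b. b)"
  shows "(\<Sum>b\<in>B. (norm ((X + H) *v b))\<^sup>2)
    \<le> (\<Sum>k\<in>K. ((\<sigma> k)\<^sup>2 - c\<^sup>2) * (\<Sum>b\<in>B. (b \<bullet> v k)\<^sup>2)) + c\<^sup>2 * card B"
proof -
  have "norm b = 1" if "b \<in> B" for b
    using assms(2) that by (simp add: orthonormal_on_def norm_eq_1)
  then have "(\<Sum>b\<in>B. (norm ((X + H) *v b))\<^sup>2)
      \<le> (\<Sum>b\<in>B. (\<Sum>k\<in>K. ((\<sigma> k)\<^sup>2 - c\<^sup>2) * (v k \<bullet> b)\<^sup>2) + c\<^sup>2)"
    by (intro sum_mono norm_sq_X_plus_H_mult_vec_le)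
  also have "\<dots> = (\<Sum>b\<in>B. \<Sum>k\<in>K. ((\<sigma> k)\<^sup>2 - c\<^sup>2) * (v k \<bullet> b)\<^sup>2) + c\<^sup>2 * card B"
    by (simp add: sum.distrib)
  also have "\<dots> = (\<Sum>k\<in>K. ((\<sigma> k)\<^sup>2 - c\<^sup>2) * (\<Sum>b\<in>B. (b \<bullet> v k)\<^sup>2)) + c\<^sup>2 * card B"
    by (subst sum.swap) (simp add: sum_distrib_left inner_commute)
  finally show ?thesis .
qed

lemma norm_le_dist_low_rank:
  assumes "R \<subseteq> K" "\<And>k. k \<in> R \<Longrightarrow> c \<le> \<sigma> k" "rank W \<le> card R"
  shows "norm H \<le> norm (W - (X + H))"
proof -
  have "0 \<le> c" using order_trans[OF norm_ge_zero H_bound[of "axis undefined 1"]] by simp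
  obtain B where B: "B \<subseteq> span (rows W)" "pairwise orthogonal B"
    "\<And>b. b \<in> B \<Longrightarrow> norm b = 1" "independent B" "card B = dim (span (rows W))"
    "span B = span (rows W)"
    using orthonormal_basis_subspace[OF subspace_span] by blast
  have finB: "finite B" using B(4) independent_imp_finite by blast
  have onB: "orthonormal_on B (\<lambda>b. b)"
    using B(2,3) by (auto simp: orthonormal_on_def pairwise_def orthogonal_def norm_eq_1)
  have "W $ i \<in> rows W" for i
    unfolding rows_def row_def by (auto simp: vec_lambda_eta)
  then have "W $ i \<in> span B" for i
    using B(6) span_base by blast
  then have "(norm (X + H))\<^sup>2 - (\<Sum>b\<in>B. (norm ((X + H) *v b))\<^sup>2)
      \<le> (norm (X + H - W))\<^sup>2"
    by (rule norm_sq_diff_row_span_ge[OF finB onB])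
  moreover have "(\<Sum>k\<in>K. ((\<sigma> k)\<^sup>2 - c\<^sup>2) * (\<Sum>b\<in>B. (b \<bullet> v k)\<^sup>2)) + c\<^sup>2 * card B
      \<le> (\<Sum>k\<in>K. (\<sigma> k)\<^sup>2)"
  proof (rule sum_discounted_weights_le[OF finite_K assms(1)])
    show "0 \<le> (\<Sum>b\<in>B. (b \<bullet> v k)\<^sup>2) \<and> (\<Sum>b\<in>B. (b \<bullet> v k)\<^sup>2) \<le> 1" if "k \<in> K" for k
      using bessel_inequality[OF finB onB, of "v k"] orthonormal_v that
      by (simp add: sum_nonneg orthonormal_on_def dot_square_norm[symmetric])
    show "c\<^sup>2 \<le> (\<sigma> k)\<^sup>2" if "k \<in> R" for k
      using assms(2)[OF that] \<open>0 \<le> c\<close> by (simp add: power_mono)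
    show "card B \<le> card R"
      using B(5) assms(3) by (simp add: row_rank_def dim_span)
  qed simp_all
  ultimately have "(norm H)\<^sup>2 \<le> (norm (X + H - W))\<^sup>2"
    using sum_norm_sq_X_plus_H_mult_vec_le[OF finB onB] norm_sq_X_plus_H by linarith
  then show ?thesis by (metis norm_minus_commute norm_ge_zero power2_le_imp_le)
qed

end

lemma norm_mult_vec_le_spec_norm: "norm (G *v x) \<le> spec_norm G * norm x"
  unfolding spec_norm_def by (rule onorm) (rule matrix_vector_mul_bounded_linear)

lemma spec_norm_pos:
  assumes "G \<noteq> 0"
  shows "0 < spec_norm G"
proof -
  have "\<not> (\<forall>x. G *v x = 0)" using assms by (simp add: matrix_eq)
  then show ?thesis
    unfolding spec_norm_def by (simp add: onorm_pos_lt[OF matrix_vector_mul_bounded_linear])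
qed

lemma singular_values_svd_decomposition:
  fixes X :: "real^'n^'m"
  assumes "is_singular_values X \<sigma>"
  obtains u v where "svd_decomposition {k\<in>{1..CARD('n)}. 0 < \<sigma> k} \<sigma> u v X"
    "\<And>i j. i \<in> {1..CARD('n)} \<Longrightarrow> j \<in> {1..CARD('n)} \<Longrightarrow> i \<le> j \<Longrightarrow> \<sigma> j \<le> \<sigma> i"
proof -
  let ?N = "{1..CARD('n)}"
  let ?K = "{k\<in>?N. 0 < \<sigma> k}"
  obtain u v where nonneg: "\<forall>k\<in>?N. 0 \<le> \<sigma> k"
    and dec: "\<forall>i\<in>?N. \<forall>j\<in>?N. i \<le> j \<longrightarrow> \<sigma> j \<le> \<sigma> i"
    and uv: "orthonormal_on ?N u" "orthonormal_on ?N v"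
    and X: "X = (\<Sum>k\<in>?N. \<sigma> k *\<^sub>R outer_prod (u k) (v k))"
    using assms unfolding is_singular_values_def orthonormal_on_def by blast
  have "X = (\<Sum>k\<in>?K. \<sigma> k *\<^sub>R outer_prod (u k) (v k))"
    unfolding X using nonneg by (intro sum.mono_neutral_right) force+
  then have "svd_decomposition ?K \<sigma> u v X"
    using uv by unfold_locales (auto elim: orthonormal_on_subset)
  then show ?thesis using that dec by blast
qed

lemma frechet_normal_imp_proj_set_low_rank:
  fixes G X :: "real^'n^'m"
  assumes F: "- G \<in> frechet_normal (low_rank r) X" and X: "rank X \<le> r"
    and dims: "r < CARD('n)" "CARD('n) \<le> CARD('m)"
    and "G \<noteq> 0" "\<alpha> > 0" and step_size: "\<alpha> * spec_norm G \<le> sing_val r X"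
  shows "X \<in> proj_set (low_rank r) (X - \<alpha> *\<^sub>R G)"
proof -
  define \<sigma> where "\<sigma> = (SOME \<sigma>. is_singular_values X \<sigma>)"
  let ?K = "{k\<in>{1..CARD('n)}. 0 < \<sigma> k}"
  have "is_singular_values X \<sigma>"
    unfolding \<sigma>_def using singular_values_exist[OF dims(2)] by (rule someI_ex)
  then obtain u v where "svd_decomposition ?K \<sigma> u v X"
    and dec: "\<And>i j. i \<in> {1..CARD('n)} \<Longrightarrow> j \<in> {1..CARD('n)} \<Longrightarrow> i \<le> j \<Longrightarrow> \<sigma> j \<le> \<sigma> i"
    by (rule singular_values_svd_decomposition) blast
  then interpret svd_decomposition ?K \<sigma> u v X by simp
  have "\<sigma> r = sing_val r X" by (simp add: sing_val_def \<sigma>_def)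
  then have \<sigma>_ge: "\<alpha> * spec_norm G \<le> \<sigma> k" if "k \<in> {1..r}" for k
    using that dec[of k r] dims(1) step_size by simp
  interpret orthogonal_perturbation ?K \<sigma> u v X "(- \<alpha>) *\<^sub>R G" "\<alpha> * spec_norm G"
  proof
    fix k x assume k: "k \<in> ?K"
    have "transpose X *v (u k /\<^sub>R \<sigma> k) = v k"
      using X_transpose_mult_left_singular[OF k] k by (simp add: matrix_vector_mult_scaleR)
    then show "((- \<alpha>) *\<^sub>R G) *v v k = 0"
      using low_rank_frechet_normal_corange[OF F X]
      by (metis scaleR_matrix_vector_assoc scaleR_zero_right)
    have "X *v (v k /\<^sub>R \<sigma> k) = u k"
      using X_mult_right_singular[OF k] k by (simp add: matrix_vector_mult_scaleR)
    then show "u k \<bullet> (((- \<alpha>) *\<^sub>R G) *v x) = 0"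
      using low_rank_frechet_normal_range[OF F X]
      by (metis inner_scaleR_right mult_zero_right scaleR_matrix_vector_assoc)
  next
    show "norm (((- \<alpha>) *\<^sub>R G) *v x) \<le> \<alpha> * spec_norm G * norm x" for x
      using mult_left_mono[OF norm_mult_vec_le_spec_norm[of G x], of \<alpha>] \<open>\<alpha> > 0\<close>
      by (simp only: flip: scaleR_matrix_vector_assoc) (simp add: mult.assoc)
  qed
  have "0 < \<alpha> * spec_norm G"
    using spec_norm_pos[OF \<open>G \<noteq> 0\<close>] \<open>\<alpha> > 0\<close> by simp
  then have "{1..r} \<subseteq> ?K"
    using \<sigma>_ge dims(1) by fastforce
  then have "norm ((- \<alpha>) *\<^sub>R G) \<le> norm (W - (X + (- \<alpha>) *\<^sub>R G))" if "rank W \<le> r" for W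
    using norm_le_dist_low_rank[of "{1..r}" W] \<sigma>_ge that by simp
  then show ?thesis
    using X by (simp add: proj_set_def low_rank_def)
qed

theorem proposition4p1:
  fixes f :: "real^'n^'m \<Rightarrow> real"
    and gradf :: "real^'n^'m \<Rightarrow> real^'n^'m"
    and A :: "nat \<Rightarrow> real^'n^'m" and b :: "nat \<Rightarrow> real" and l :: nat
    and r :: nat and X :: "real^'n^'m" and y :: "nat \<Rightarrow> real" and \<alpha> :: real
  assumes dims: "r < CARD('n)" "CARD('n) \<le> CARD('m)"
    and f_grad: "\<And>Z. (f has_derivative (\<lambda>H. gradf Z \<bullet> H)) (at Z)"
    and f_C1: "continuous_on UNIV gradf"
    and X_feas: "X \<in> affine_feas l A b \<inter> low_rank r"
    and alpha_pos: "\<alpha> > 0"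
  shows "let G = gradf X + (\<Sum>i<l. y i *\<^sub>R A i);
             s = rank X;
             \<beta> = (if G \<noteq> 0 then ereal (sing_val r X / spec_norm G) else \<infinity>);
             Fstat = (- G \<in> frechet_normal (low_rank r) X);
             astat = (X \<in> proj_set (low_rank r) (X - \<alpha> *\<^sub>R G))
         in (astat \<longrightarrow> Fstat)
          \<and> (s = r \<and> ereal \<alpha> \<le> \<beta> \<longrightarrow> (Fstat \<longrightarrow> astat))
          \<and> (s < r \<longrightarrow> (Fstat \<longrightarrow> astat))"
proof -
  define G where "G = gradf X + (\<Sum>i<l. y i *\<^sub>R A i)"
  let ?Fstat = "- G \<in> frechet_normal (low_rank r) X"
  let ?astat = "X \<in> proj_set (low_rank r) (X - \<alpha> *\<^sub>R G)"
  have X: "X \<in> low_rank r" "rank X \<le> r" using X_feas by (auto simp: low_rank_def)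
  have G0: ?astat if "G = 0"
    using proj_set_self[OF X(1)] that by simp
  have i: "?astat \<longrightarrow> ?Fstat"
    using proj_set_imp_frechet_normal alpha_pos by blast
  \<comment> \<open>(ii) holds without the hypothesis \<open>s = r\<close>\<close>
  have ii: "ereal \<alpha> \<le> (if G \<noteq> 0 then ereal (sing_val r X / spec_norm G) else \<infinity>) \<longrightarrow> ?Fstat \<longrightarrow> ?astat"
  proof (intro impI)
    assume \<beta>: "ereal \<alpha> \<le> (if G \<noteq> 0 then ereal (sing_val r X / spec_norm G) else \<infinity>)" and ?Fstat
    show ?astat
    proof (cases "G = 0")
      case False
      then have "\<alpha> * spec_norm G \<le> sing_val r X"
        using \<beta> spec_norm_pos[of G] by (simp add: pos_le_divide_eq)
      then show ?thesis
        using frechet_normal_imp_proj_set_low_rank[OF \<open>?Fstat\<close> X(2) dims False alpha_pos] by blast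
    qed (rule G0)
  qed
  have iii: "rank X < r \<longrightarrow> ?Fstat \<longrightarrow> ?astat"
    using low_rank_frechet_normal_rank_deficient G0 by blast
  show ?thesis
    unfolding Let_def G_def[symmetric] using i ii iii by blast
qed

end
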